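(* Let $\pmb x,\pmb y\in\{0,1\}^n$, $\pmb\delta\in\{0,1\}^n$, $\hat{\pmb c},\pmb d\in\mathbb R^n_{\ge0}$ and an integer $\Gamma'\ge0$ be fixed. Then the balancing problem \[\min\Big\{\sum_{i\in[n]}(\hat c_i+d_i\delta_i+d_i\epsilon_i)(x_i-y_i)\ :\ \sum_{i\in[n]}\epsilon_i\le\Gamma',\ \pmb\epsilon\in\{0,1\}^n\Big\}\] has an optimal solution $\pmb\epsilon$ with $\epsilon_i+x_i\le1$ for all $i\in[n]$.
   Context: $[n]=\{1,\dots,n\}$. *)

theory Defs
  imports Complex_Main
begin

text \<open>Vectors in R^n / {0,1}^n are functions nat => real on the index set [n] = {1..n}.\<close>

definition binvec :: "nat \<Rightarrow> (nat \<Rightarrow> real) \<Rightarrow> bool" where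
  "binvec n v \<longleftrightarrow> (\<forall>i\<in>{1..n}. v i \<in> {0, 1})"

text \<open>Feasible epsilons: binary on [n], zero outside [n] (so they are genuine n-vectors), budget Gamma'.\<close>
definition balancing_feasible :: "nat \<Rightarrow> nat \<Rightarrow> (nat \<Rightarrow> real) \<Rightarrow> bool" where
  "balancing_feasible n \<Gamma>' eps \<longleftrightarrow>
     binvec n eps \<and> (\<forall>i. i \<notin> {1..n} \<longrightarrow> eps i = 0) \<and> (\<Sum>i=1..n. eps i) \<le> real \<Gamma>'"

definition balancing_obj ::
  "nat \<Rightarrow> (nat \<Rightarrow> real) \<Rightarrow> (nat \<Rightarrow> real) \<Rightarrow> (nat \<Rightarrow> real) \<Rightarrow> (nat \<Rightarrow> real) \<Rightarrow> (nat \<Rightarrow> real)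
     \<Rightarrow> (nat \<Rightarrow> real) \<Rightarrow> real" where
  "balancing_obj n c d \<delta> x y eps = (\<Sum>i=1..n. (c i + d i * \<delta> i + d i * eps i) * (x i - y i))"

end

theory Submission
  imports Defs
begin

text \<open>The feasible set is finite and contains \<open>0\<close>, so an optimal \<open>\<epsilon>\<close> exists. Zeroing \<open>\<epsilon>\<^sub>i\<close>
  wherever \<open>x\<^sub>i = 1\<close> keeps it feasible and cannot increase the objective: at such \<open>i\<close> the term
  is \<open>(c\<^sub>i + d\<^sub>i \<delta>\<^sub>i + d\<^sub>i \<epsilon>\<^sub>i)(1 - y\<^sub>i)\<close>, which is monotone in \<open>\<epsilon>\<^sub>i\<close> because \<open>d\<^sub>i \<ge> 0\<close> and
  \<open>y\<^sub>i \<le> 1\<close>. Hence the zeroed optimum is still optimal and satisfies \<open>\<epsilon>\<^sub>i + x\<^sub>i \<le> 1\<close>.\<close>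

lemma finite_balancing_feasible: "finite {eps. balancing_feasible n \<Gamma>' eps}"
proof (rule finite_subset)
  show "{eps. balancing_feasible n \<Gamma>' eps} \<subseteq> (\<lambda>S i. if i \<in> S then 1 else 0) ` Pow {1..n}"
  proof
    fix eps assume "eps \<in> {eps. balancing_feasible n \<Gamma>' eps}"
    then have bin: "binvec n eps" and zero: "\<forall>i. i \<notin> {1..n} \<longrightarrow> eps i = 0"
      by (auto simp: balancing_feasible_def)
    have "eps = (\<lambda>i. if i \<in> {i\<in>{1..n}. eps i = 1} then 1 else 0)"
    proof
      fix i
      show "eps i = (if i \<in> {i\<in>{1..n}. eps i = 1} then 1 else 0)"
        using bin zero unfolding binvec_def by (cases "i \<in> {1..n}") auto
    qed
    then show "eps \<in> (\<lambda>S i. if i \<in> S then 1 else 0) ` Pow {1..n}"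
      by blast
  qed
qed simp

lemma balancing_feasible_zero: "balancing_feasible n \<Gamma>' (\<lambda>_. 0)"
  unfolding balancing_feasible_def binvec_def by auto

lemma balancing_feasible_minimizer_exists:
  fixes f :: "(nat \<Rightarrow> real) \<Rightarrow> 'a::linorder"
  shows "\<exists>eps. balancing_feasible n \<Gamma>' eps
           \<and> (\<forall>eps'. balancing_feasible n \<Gamma>' eps' \<longrightarrow> f eps \<le> f eps')"
proof -
  let ?F = "{eps. balancing_feasible n \<Gamma>' eps}"
  have fin: "finite (f ` ?F)"
    using finite_balancing_feasible by (rule finite_imageI)
  have "(\<lambda>_. 0) \<in> ?F"
    by (simp add: balancing_feasible_zero)
  then have "Min (f ` ?F) \<in> f ` ?F"
    using fin by (intro Min_in) auto
  then obtain eps where "eps \<in> ?F" and min: "f eps = Min (f ` ?F)"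
    by auto
  moreover have "f eps \<le> f eps'" if "eps' \<in> ?F" for eps'
    unfolding min using fin that by (intro Min_le) simp_all
  ultimately show ?thesis
    by blast
qed

lemma balancing_feasible_mult_binvec:
  assumes "balancing_feasible n \<Gamma>' eps" and "binvec n m"
  shows "balancing_feasible n \<Gamma>' (\<lambda>i. eps i * m i)"
proof -
  have bin: "eps i \<in> {0, 1}" "m i \<in> {0, 1}" if "i \<in> {1..n}" for i
    using assms that unfolding balancing_feasible_def binvec_def by blast+
  have "(\<Sum>i=1..n. eps i * m i) \<le> (\<Sum>i=1..n. eps i)"
  proof (rule sum_mono)
    fix i assume "i \<in> {1..n}"
    with bin show "eps i * m i \<le> eps i" by fastforce
  qed
  moreover have "eps i * m i \<in> {0, 1}" if "i \<in> {1..n}" for i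
    using bin[OF that] by auto
  ultimately show ?thesis
    using assms(1) unfolding balancing_feasible_def binvec_def by auto
qed

lemma balancing_obj_mult_compl_x_le:
  assumes "binvec n x" and "binvec n y" and "binvec n eps"
    and "\<forall>i\<in>{1..n}. d i \<ge> 0"
  shows "balancing_obj n c d \<delta> x y (\<lambda>i. eps i * (1 - x i)) \<le> balancing_obj n c d \<delta> x y eps"
  unfolding balancing_obj_def
proof (rule sum_mono)
  fix i assume i: "i \<in> {1..n}"
  then have x: "x i \<in> {0, 1}" and y: "y i \<in> {0, 1}" and eps: "eps i \<in> {0, 1}" and "d i \<ge> 0"
    using assms unfolding binvec_def by blast+
  show "(c i + d i * \<delta> i + d i * (eps i * (1 - x i))) * (x i - y i)
      \<le> (c i + d i * \<delta> i + d i * eps i) * (x i - y i)"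
  proof (cases "x i = 0")
    case False
    with x have "x i = 1" by simp
    have "c i + d i * \<delta> i + d i * (eps i * (1 - x i)) \<le> c i + d i * \<delta> i + d i * eps i"
      using \<open>x i = 1\<close> \<open>d i \<ge> 0\<close> eps by auto
    moreover have "0 \<le> x i - y i"
      using \<open>x i = 1\<close> y by auto
    ultimately show ?thesis
      by (rule mult_right_mono)
  qed simp
qed

theorem lemma1:
  fixes n \<Gamma>' :: nat and x y \<delta> c d :: "nat \<Rightarrow> real"
  assumes "binvec n x" and "binvec n y" and "binvec n \<delta>"
    and "\<forall>i\<in>{1..n}. c i \<ge> 0" and "\<forall>i\<in>{1..n}. d i \<ge> 0"
  shows "\<exists>eps. balancing_feasible n \<Gamma>' eps
           \<and> (\<forall>eps'. balancing_feasible n \<Gamma>' eps' \<longrightarrow>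
                 balancing_obj n c d \<delta> x y eps \<le> balancing_obj n c d \<delta> x y eps')
           \<and> (\<forall>i\<in>{1..n}. eps i + x i \<le> 1)"
proof -
  let ?f = "balancing_obj n c d \<delta> x y"
  obtain eps where feas: "balancing_feasible n \<Gamma>' eps"
    and opt: "\<forall>eps'. balancing_feasible n \<Gamma>' eps' \<longrightarrow> ?f eps \<le> ?f eps'"
    using balancing_feasible_minimizer_exists by blast
  have eps: "binvec n eps"
    using feas unfolding balancing_feasible_def by blast
  define eps0 where "eps0 = (\<lambda>i. eps i * (1 - x i))"
  have "binvec n (\<lambda>i. 1 - x i)"
    using assms(1) unfolding binvec_def by auto
  then have "balancing_feasible n \<Gamma>' eps0"
    unfolding eps0_def by (rule balancing_feasible_mult_binvec[OF feas])
  moreover have "\<forall>eps'. balancing_feasible n \<Gamma>' eps' \<longrightarrow> ?f eps0 \<le> ?f eps'"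
    using order_trans[OF balancing_obj_mult_compl_x_le[OF assms(1,2) eps assms(5)]] opt
    unfolding eps0_def by blast
  moreover have "\<forall>i\<in>{1..n}. eps0 i + x i \<le> 1"
  proof
    fix i assume "i \<in> {1..n}"
    then have "eps i \<in> {0, 1}" and "x i \<in> {0, 1}"
      using eps assms(1) unfolding binvec_def by blast+
    then show "eps0 i + x i \<le> 1"
      unfolding eps0_def by auto
  qed
  ultimately show ?thesis
    by blast
qed

end
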